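(* Let $\nu$ be a Borel probability measure on $\operatorname{Hom}(\mathbb{S}^1)$ such that $\Gamma_\nu$ is proximal and does not fix any point in $\mathbb{S}^1$. Let $\pi,\theta\colon X_\nu^{\mathbb{N}}\to\mathbb{S}^1$ be measurable maps such that for all $x\in\mathbb{S}^1$ and $\nu^{\mathbb{N}}$-almost every $\omega=(f_n)_{n\in\mathbb{N}}$, $\lim_{n\to\infty}f_1\circ\cdots\circ f_n(x)=\pi(\omega)$ and $\lim_{n\to\infty}f_1^{-1}\circ\cdots\circ f_n^{-1}(x)=\theta(\omega)$. Then the probability measures $$\eta=\int_{X_\nu^{\mathbb{N}}}\delta_{\pi(\omega)}\,d\nu^{\mathbb{N}}(\omega)\quad\text{and}\quad \eta^-=\int_{X_\nu^{\mathbb{N}}}\delta_{\theta(\omega)}\,d\nu^{\mathbb{N}}(\omega)$$ are the unique probability measures on $\mathbb{S}^1$ satisfying, respectively, $$\eta=\int_{X_\nu}f_*\eta\,d\nu(f)\quad\text{and}\quad \eta^-=\int_{X_\nu}(f^{-1})_*\eta^-\,d\nu(f).$$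
   Context: $\mathbb{S}^1=\mathbb{R}/\mathbb{Z}$ with its usual metric $d$; $\operatorname{Hom}(\mathbb{S}^1)$ is the group of all homeomorphisms of $\mathbb{S}^1$ (orientation preserving or reversing). $X_\nu$ is the topological support of $\nu$, $\Gamma_\nu$ the semigroup generated by $X_\nu$. $\Gamma_\nu$ is proximal if for all $x,y\in\mathbb{S}^1$ there is a sequence $(g_n)$ in $\Gamma_\nu$ with $d(g_n(x),g_n(y))\to0$; it does not fix any point if no $x$ satisfies $f(x)=x$ for all $f\in\Gamma_\nu$. $\nu^{\mathbb{N}}$ is the product measure on $X_\nu^{\mathbb{N}}$, with elements written $\omega=(f_n)_{n\in\mathbb{N}}$. *)

theory Defs
  imports "HOL-Probability.Probability"
begin

text \<open>The circle S^1 = R/Z, realised as the unit circle in the complex plane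
  (z = exp(2 pi i t)).  Its R/Z metric is |Arg(z/w)|/(2 pi).\<close>

definition S1 :: "complex set" where
  "S1 = sphere 0 1"

definition s1dist :: "complex \<Rightarrow> complex \<Rightarrow> real" where
  "s1dist z w = \<bar>Arg (z / w)\<bar> / (2 * pi)"

definition S1M :: "complex measure" where
  "S1M = restrict_space borel S1"

text \<open>Hom(S^1): homeomorphisms of S^1 (either orientation), as functions that are
  extensional (undefined) outside S1.\<close>
definition Hom :: "(complex \<Rightarrow> complex) set" where
  "Hom = {f. f \<in> extensional S1 \<and> (\<exists>g. homeomorphism S1 S1 f g)}"

text \<open>Measurable structure on Hom(S^1): the sigma-algebra generated by the evaluation
  maps, which coincides with the Borel sigma-algebra of the (Polish) compact-open topology.\<close>
definition HomM :: "(complex \<Rightarrow> complex) measure" where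
  "HomM = restrict_space (Pi\<^sub>M S1 (\<lambda>_. borel)) Hom"

definition hinv :: "(complex \<Rightarrow> complex) \<Rightarrow> complex \<Rightarrow> complex" where
  "hinv f = restrict (inv_into S1 f) S1"

definition udist :: "(complex \<Rightarrow> complex) \<Rightarrow> (complex \<Rightarrow> complex) \<Rightarrow> real" where
  "udist f g = (SUP x\<in>S1. cmod (f x - g x))"

definition supp :: "(complex \<Rightarrow> complex) measure \<Rightarrow> (complex \<Rightarrow> complex) set" where
  "supp nu = {f \<in> Hom. \<forall>e>0. emeasure nu {g \<in> space nu. udist f g < e} > 0}"

inductive_set Gamma :: "(complex \<Rightarrow> complex) measure \<Rightarrow> (complex \<Rightarrow> complex) set"
  for nu where
  gen: "f \<in> supp nu \<Longrightarrow> f \<in> Gamma nu"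
| comp: "f \<in> Gamma nu \<Longrightarrow> g \<in> Gamma nu \<Longrightarrow> compose S1 f g \<in> Gamma nu"

definition proximal :: "(complex \<Rightarrow> complex) measure \<Rightarrow> bool" where
  "proximal nu \<longleftrightarrow> (\<forall>x\<in>S1. \<forall>y\<in>S1. \<exists>g :: nat \<Rightarrow> complex \<Rightarrow> complex.
      (\<forall>n. g n \<in> Gamma nu) \<and> (\<lambda>n. s1dist (g n x) (g n y)) \<longlonglongrightarrow> 0)"

definition fixes_point :: "(complex \<Rightarrow> complex) measure \<Rightarrow> bool" where
  "fixes_point nu \<longleftrightarrow> (\<exists>x\<in>S1. \<forall>f\<in>Gamma nu. f x = x)"

text \<open>Left compositions f_1 o ... o f_n and f_1^{-1} o ... o f_n^{-1}
  (omega 0 plays the role of f_1).\<close>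
primrec fwd_comp :: "(nat \<Rightarrow> complex \<Rightarrow> complex) \<Rightarrow> nat \<Rightarrow> complex \<Rightarrow> complex" where
  "fwd_comp \<omega> 0 = id"
| "fwd_comp \<omega> (Suc n) = fwd_comp \<omega> n \<circ> \<omega> n"

primrec bwd_comp :: "(nat \<Rightarrow> complex \<Rightarrow> complex) \<Rightarrow> nat \<Rightarrow> complex \<Rightarrow> complex" where
  "bwd_comp \<omega> 0 = id"
| "bwd_comp \<omega> (Suc n) = bwd_comp \<omega> n \<circ> hinv (\<omega> n)"

definition stationary :: "(complex \<Rightarrow> complex) measure \<Rightarrow> complex measure \<Rightarrow> bool" where
  "stationary nu \<mu> \<longleftrightarrow>
     (\<forall>A\<in>sets S1M. emeasure \<mu> A = (\<integral>\<^sup>+ f. emeasure (distr \<mu> S1M f) A \<partial>nu))"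

definition inv_stationary :: "(complex \<Rightarrow> complex) measure \<Rightarrow> complex measure \<Rightarrow> bool" where
  "inv_stationary nu \<mu> \<longleftrightarrow>
     (\<forall>A\<in>sets S1M. emeasure \<mu> A = (\<integral>\<^sup>+ f. emeasure (distr \<mu> S1M (hinv f)) A \<partial>nu))"

end

theory Submission
  imports Defs
begin

(*
  Both products f_1 o ... o f_n and f_1^-1 o ... o f_n^-1 are compositions
  a(f_1) o ... o a(f_n) for a jointly measurable action a of X_\<nu> on S^1 by continuous
  maps (a f = f, resp. a f = f^-1), so it suffices to treat such an action together with
  its limit map p.  Passing to the limit in a(f_1) o (a(f_2) o ... o a(f_n)) gives
  p(\<omega>) = a(\<omega>_1)(p(\<sigma> \<omega>)) almost surely, \<sigma> the shift; as \<nu>^N = \<nu> \<otimes> \<nu>^N, this is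
  the stationarity of p_* \<nu>^N.  Conversely, a stationary \<mu> is the image of \<nu>^N \<otimes> \<mu>
  under (\<omega>, y) \<mapsto> a(\<omega>_1) o ... o a(\<omega>_n) y for every n.  For continuous \<phi>, letting
  n \<rightarrow> \<infinity> and using dominated convergence twice gives \<integral> \<phi> d\<mu> = \<integral> \<phi> o p d\<nu>^N, and
  integrals of continuous functions determine finite Borel measures on S^1.
  Proximality and the absence of a common fixed point only serve to produce the limits
  \<pi> and \<theta>, which are part of the hypotheses here.
*)

section \<open>Measurability of maps continuous in one variable\<close>

lemma closure_approachable_inverse_Suc:
  fixes S :: "'a::metric_space set"
  shows "x \<in> closure S \<longleftrightarrow> (\<forall>k::nat. \<exists>y\<in>S. dist y x < inverse (Suc k))"
proof
  assume "x \<in> closure S"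
  then show "\<forall>k::nat. \<exists>y\<in>S. dist y x < inverse (Suc k)"
    unfolding closure_approachable by simp
next
  assume approx: "\<forall>k::nat. \<exists>y\<in>S. dist y x < inverse (Suc k)"
  show "x \<in> closure S"
    unfolding closure_approachable
  proof (intro allI impI)
    fix e :: real assume "0 < e"
    then obtain k where "1 / real (Suc k) < e" by (rule nat_approx_posE)
    with approx show "\<exists>y\<in>S. dist y x < e"
      by (metis inverse_eq_divide order.strict_trans)
  qed
qed

lemma borel_measurable_Caratheodory:
  fixes F :: "'b \<Rightarrow> 'a::{metric_space, second_countable_topology} \<Rightarrow> 'c::metric_space"
  assumes meas: "\<And>x. x \<in> S \<Longrightarrow> (\<lambda>\<omega>. F \<omega> x) \<in> borel_measurable M"
    and cont: "\<And>\<omega>. \<omega> \<in> space M \<Longrightarrow> continuous_on S (F \<omega>)"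
  shows "(\<lambda>(\<omega>, x). F \<omega> x) \<in> borel_measurable (M \<Otimes>\<^sub>M restrict_space borel S)"
proof (cases "S = {}")
  case True
  then show ?thesis by (simp add: measurable_def space_pair_measure space_restrict_space)
next
  case False
  let ?N = "M \<Otimes>\<^sub>M restrict_space borel S"
  obtain D where D: "countable D" "D \<subseteq> S" "S \<subseteq> closure D" using separable by blast
  with False have "D \<noteq> {}" by auto
  define d where "d = from_nat_into D"
  have d_in_S: "d n \<in> S" for n
    using from_nat_into[OF \<open>D \<noteq> {}\<close>] D(2) by (auto simp: d_def)
  have range_d: "range d = D"
    using range_from_nat_into[OF \<open>D \<noteq> {}\<close> D(1)] by (simp add: d_def)
  \<comment> \<open>q k is a measurable, countably-valued approximation of the identity on S.\<close>
  define q where "q k x = d (LEAST n. dist (d n) x < inverse (Suc k))" for k x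
  have q_near: "dist (q k x) x < inverse (Suc k)" if "x \<in> S" for k x
  proof -
    have "\<exists>n. dist (d n) x < inverse (Suc k)"
      using that D(3) range_d closure_approachable_inverse_Suc[of x D] by blast
    then show ?thesis unfolding q_def by (rule LeastI_ex)
  qed
  have "(\<lambda>z. F (fst z) (q k (snd z))) \<in> borel_measurable ?N" for k
    unfolding q_def
  proof (rule measurable_compose_countable'[where f="\<lambda>n z. F (fst z) (d n)" and I=UNIV])
    show "(\<lambda>z. F (fst z) (d n)) \<in> borel_measurable ?N" for n
      by (rule measurable_compose[OF measurable_fst meas[OF d_in_S]])
    have [measurable]: "(\<lambda>x. x) \<in> borel_measurable (restrict_space borel S)"
      by (rule measurable_restrict_space1) simp
    show "(\<lambda>z. LEAST n. dist (d n) (snd z) < inverse (Suc k)) \<in> measurable ?N (count_space UNIV)"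
      by measurable
  qed simp
  then show ?thesis
  proof (rule borel_measurable_LIMSEQ_metric)
    fix z assume "z \<in> space ?N"
    then have \<omega>: "fst z \<in> space M" and x: "snd z \<in> S"
      by (auto simp: space_pair_measure space_restrict_space)
    have "(\<lambda>k. q k (snd z)) \<longlonglongrightarrow> snd z"
    proof (rule tendsto_dist_iff[THEN iffD2],
        rule Lim_null_comparison[OF always_eventually LIMSEQ_inverse_real_of_nat], intro allI)
      show "norm (dist (q k (snd z)) (snd z)) \<le> inverse (Suc k)" for k
        using q_near[OF x, of k] by simp
    qed
    then have "(\<lambda>k. F (fst z) (q k (snd z))) \<longlonglongrightarrow> F (fst z) (snd z)"
      by (rule continuous_on_tendsto_compose[OF cont[OF \<omega>] _ x]) (simp add: q_def d_in_S)
    then show "(\<lambda>k. F (fst z) (q k (snd z))) \<longlonglongrightarrow> (case z of (\<omega>, x) \<Rightarrow> F \<omega> x)"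
      by (simp add: split_beta)
  qed
qed

lemma homeomorphism_inverse_mem_iff_closure_image:
  fixes f :: "'a::metric_space \<Rightarrow> 'a"
  assumes hom: "homeomorphism S S f g" and S: "closed S" and C: "closed C"
    and D: "D \<subseteq> C \<inter> S" "C \<inter> S \<subseteq> closure D" and y: "y \<in> S"
  shows "g y \<in> C \<longleftrightarrow> y \<in> closure (f ` D)"
proof
  assume "g y \<in> C"
  have "closure D \<subseteq> S" using D S by (simp add: closure_minimal)
  then have "f ` closure D \<subseteq> closure (f ` D)"
    using hom by (intro image_closure_subset closure_subset)
      (auto simp: homeomorphism_def intro: continuous_on_subset)
  moreover have "g y \<in> closure D"
    using \<open>g y \<in> C\<close> y hom D(2) by (auto simp: homeomorphism_def)
  ultimately show "y \<in> closure (f ` D)"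
    using y hom by (force simp: homeomorphism_def)
next
  assume "y \<in> closure (f ` D)"
  have "closed (S \<inter> g -` C)"
    using hom S C by (intro continuous_closed_preimage) (auto simp: homeomorphism_def)
  moreover have "f ` D \<subseteq> S \<inter> g -` C"
    using D homeomorphism_apply1[OF hom] homeomorphism_image1[OF hom] by blast
  ultimately have "closure (f ` D) \<subseteq> S \<inter> g -` C"
    by (rule closure_minimal[rotated])
  then show "g y \<in> C" using \<open>y \<in> closure (f ` D)\<close> by auto
qed

lemma borel_measurable_inverse_homeomorphism:
  fixes F G :: "'b \<Rightarrow> 'a::{metric_space, second_countable_topology} \<Rightarrow> 'a"
  assumes meas: "\<And>x. x \<in> S \<Longrightarrow> (\<lambda>\<omega>. F \<omega> x) \<in> borel_measurable M"
    and hom: "\<And>\<omega>. \<omega> \<in> space M \<Longrightarrow> homeomorphism S S (F \<omega>) (G \<omega>)"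
    and S: "closed S"
  shows "(\<lambda>(\<omega>, y). G \<omega> y) \<in> borel_measurable (M \<Otimes>\<^sub>M restrict_space borel S)"
proof -
  let ?N = "M \<Otimes>\<^sub>M restrict_space borel S"
  have "(\<lambda>(\<omega>, y). G \<omega> y) -` C \<inter> space ?N \<in> sets ?N" if C: "closed C" for C
  proof -
    obtain D where D: "countable D" "D \<subseteq> C \<inter> S" "C \<inter> S \<subseteq> closure D"
      using separable by blast
    have [measurable]: "(\<lambda>x. x) \<in> borel_measurable (restrict_space borel S)"
      by (rule measurable_restrict_space1) simp
    have [measurable]: "(\<lambda>z. F (fst z) d) \<in> borel_measurable ?N" if "d \<in> D" for d
      using that D(2) by (intro measurable_compose[OF measurable_fst meas]) auto
    have "G \<omega> y \<in> C \<longleftrightarrow> (\<forall>k::nat. \<exists>d\<in>D. dist (F \<omega> d) y < inverse (Suc k))"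
      if "\<omega> \<in> space M" "y \<in> S" for \<omega> y
      using homeomorphism_inverse_mem_iff_closure_image[OF hom S C D(2,3)] that
      by (simp add: closure_approachable_inverse_Suc)
    then have "(\<lambda>(\<omega>, y). G \<omega> y) -` C \<inter> space ?N
        = {z \<in> space ?N. \<forall>k::nat. \<exists>d\<in>D. dist (F (fst z) d) (snd z) < inverse (Suc k)}"
      by (auto simp: space_pair_measure space_restrict_space)
    also have "\<dots> \<in> sets ?N"
      by (intro sets.sets_Collect_countable_All sets.sets_Collect_countable_Ex' D(1)) measurable
    finally show ?thesis .
  qed
  then have "(\<lambda>(\<omega>, y). G \<omega> y) \<in> measurable ?N (sigma UNIV (Collect closed))"
    by (intro measurable_measure_of) auto
  then show ?thesis by (simp only: borel_eq_closed)
qed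

section \<open>Continuous functions determine finite Borel measures\<close>

lemma tendsto_cutoff_infdist:
  assumes "closed C" "C \<noteq> {}"
  shows "(\<lambda>k. max 0 (1 - real k * infdist z C)) \<longlonglongrightarrow> indicator C z"
proof (cases "z \<in> C")
  case True
  then show ?thesis by simp
next
  case False
  then have d: "infdist z C > 0"
    using in_closed_iff_infdist_zero[OF assms] infdist_nonneg[of z C] by simp
  obtain N :: nat where N: "1 / infdist z C < real N"
    using reals_Archimedean2 by blast
  have "max 0 (1 - real k * infdist z C) = 0" if "N \<le> k" for k
  proof -
    have "real N * infdist z C \<le> real k * infdist z C"
      using that d by (intro mult_right_mono) auto
    moreover have "1 < real N * infdist z C"
      using N d by (simp add: field_simps)
    ultimately show ?thesis by simp
  qed
  then have "(\<lambda>k. max 0 (1 - real k * infdist z C)) \<longlonglongrightarrow> 0"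
    by (intro tendsto_eventually) (auto simp: eventually_sequentially)
  then show ?thesis using False by simp
qed

lemma tendsto_integral_cutoff_infdist:
  fixes \<mu> :: "'a::metric_space measure"
  assumes "finite_measure \<mu>" and sets: "sets \<mu> = sets (restrict_space borel S)"
    and S: "S \<in> sets borel" and C: "closed C" "C \<noteq> {}"
  shows "(\<lambda>k. \<integral>z. max 0 (1 - real k * infdist z C) \<partial>\<mu>) \<longlonglongrightarrow> measure \<mu> (C \<inter> S)"
proof -
  interpret finite_measure \<mu> by fact
  have space: "space \<mu> = S"
    using sets_eq_imp_space_eq[OF sets] S by (simp add: space_restrict_space)
  have CS: "C \<inter> S \<in> sets \<mu>"
    using C S by (simp add: sets sets_restrict_space_iff)
  have id_meas: "(\<lambda>x. x) \<in> borel_measurable \<mu>"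
    unfolding measurable_cong_sets[OF sets refl] by (rule measurable_restrict_space1) simp
  have "(\<lambda>k. \<integral>z. max 0 (1 - real k * infdist z C) \<partial>\<mu>) \<longlonglongrightarrow> (\<integral>z. indicator (C \<inter> S) z \<partial>\<mu>)"
  proof (rule integral_dominated_convergence[where w="\<lambda>_. 1"])
    show "(\<lambda>z. max 0 (1 - real k * infdist z C)) \<in> borel_measurable \<mu>" for k
    proof -
      have "continuous_on UNIV (\<lambda>z. max 0 (1 - real k * infdist z C))"
        by (intro continuous_intros)
      then show ?thesis by (rule measurable_compose[OF id_meas borel_measurable_continuous_onI])
    qed
    show "AE z in \<mu>. norm (max 0 (1 - real k * infdist z C)) \<le> 1" for k
      using infdist_nonneg by (intro AE_I2) (auto simp: zero_le_mult_iff)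
    show "AE z in \<mu>. (\<lambda>k. max 0 (1 - real k * infdist z C)) \<longlonglongrightarrow> indicator (C \<inter> S) z"
      using tendsto_cutoff_infdist[OF C] by (intro AE_I2) (simp add: space indicator_inter_arith)
  qed (use CS in auto)
  then show ?thesis using CS by simp
qed

lemma measure_eqI_integral_continuous:
  fixes \<mu> \<eta> :: "'a::metric_space measure"
  assumes "finite_measure \<mu>" "finite_measure \<eta>"
    and sets: "sets \<mu> = sets (restrict_space borel S)" "sets \<eta> = sets (restrict_space borel S)"
    and S: "S \<in> sets borel"
    and eq: "\<And>\<phi> :: 'a \<Rightarrow> real. continuous_on UNIV \<phi> \<Longrightarrow> (\<And>z. 0 \<le> \<phi> z \<and> \<phi> z \<le> 1) \<Longrightarrow>
               (\<integral>z. \<phi> z \<partial>\<mu>) = (\<integral>z. \<phi> z \<partial>\<eta>)"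
  shows "\<mu> = \<eta>"
proof -
  interpret M: finite_measure \<mu> by fact
  interpret E: finite_measure \<eta> by fact
  have space: "space \<mu> = S" "space \<eta> = S"
    using sets_eq_imp_space_eq[OF sets(1)] sets_eq_imp_space_eq[OF sets(2)] S
    by (simp_all add: space_restrict_space)
  have id_meas: "(\<lambda>x. x) \<in> measurable \<mu> borel" "(\<lambda>x. x) \<in> measurable \<eta> borel"
    unfolding measurable_cong_sets[OF sets(1) refl] measurable_cong_sets[OF sets(2) refl]
    by (auto intro: measurable_restrict_space1)
  have closed_eq: "emeasure \<mu> (C \<inter> S) = emeasure \<eta> (C \<inter> S)" if C: "closed C" for C
  proof (cases "C = {}")
    case False
    have "continuous_on UNIV (\<lambda>z. max 0 (1 - real k * infdist z C))" for k
      by (intro continuous_intros)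
    moreover have "0 \<le> max 0 (1 - real k * infdist z C) \<and> max 0 (1 - real k * infdist z C) \<le> 1"
      for k z using infdist_nonneg[of z C] by auto
    ultimately have "(\<lambda>k. \<integral>z. max 0 (1 - real k * infdist z C) \<partial>\<mu>) \<longlonglongrightarrow> measure \<eta> (C \<inter> S)"
      using tendsto_integral_cutoff_infdist[OF assms(2) sets(2) S C False] eq by simp
    with tendsto_integral_cutoff_infdist[OF assms(1) sets(1) S C False]
    have "measure \<mu> (C \<inter> S) = measure \<eta> (C \<inter> S)" by (rule LIMSEQ_unique)
    then show ?thesis by (simp add: M.emeasure_eq_measure E.emeasure_eq_measure)
  qed simp
  have "distr \<mu> borel (\<lambda>x. x) = distr \<eta> borel (\<lambda>x. x)"
  proof (rule measure_eqI_generator_eq[where E="Collect closed" and \<Omega>=UNIV and A="\<lambda>_. UNIV"])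
    show "emeasure (distr \<mu> borel (\<lambda>x. x)) X = emeasure (distr \<eta> borel (\<lambda>x. x)) X"
      if "X \<in> Collect closed" for X
      using closed_eq[of X] that by (simp add: emeasure_distr id_meas space Int_commute)
    show "emeasure (distr \<mu> borel (\<lambda>x. x)) UNIV \<noteq> \<infinity>"
      by (simp add: emeasure_distr id_meas)
  qed (auto simp: Int_stable_def borel_eq_closed)
  then show ?thesis
  proof (intro measure_eqI)
    fix A assume "A \<in> sets \<mu>"
    then have A: "A \<in> sets borel" "A \<subseteq> S"
      using S by (auto simp: sets sets_restrict_space_iff)
    assume "distr \<mu> borel (\<lambda>x. x) = distr \<eta> borel (\<lambda>x. x)"
    then have "emeasure (distr \<mu> borel (\<lambda>x. x)) A = emeasure (distr \<eta> borel (\<lambda>x. x)) A"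
      by simp
    then show "emeasure \<mu> A = emeasure \<eta> A"
      using A by (simp add: emeasure_distr id_meas space Int_absorb2)
  qed (simp add: sets)
qed

section \<open>Random actions on the circle\<close>

lemma (in sequence_space) measurable_PiM_shift: "(\<lambda>\<omega>. \<omega> \<circ> Suc) \<in> measurable S S"
  by (rule measurable_PiM_single') (auto simp: space_PiM intro: measurable_component_singleton)

lemma (in sequence_space) distr_PiM_shift: "distr S S (\<lambda>\<omega>. \<omega> \<circ> Suc) = S"
  using distr_PiM_reindex[of UNIV "\<lambda>_. M" Suc UNIV] M.prob_space_axioms
  by (simp add: restrict_UNIV comp_def)

lemma (in sequence_space) AE_PiM_shift:
  assumes "AE \<omega> in S. Q \<omega>"
  shows "AE \<omega> in S. Q (\<omega> \<circ> Suc)"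
  using assms by (intro AE_distrD[OF measurable_PiM_shift]) (simp only: distr_PiM_shift)

lemma (in sequence_space) nn_integral_PiM_case_nat:
  assumes "F \<in> borel_measurable S"
  shows "(\<integral>\<^sup>+\<omega>. F \<omega> \<partial>S) = (\<integral>\<^sup>+s. \<integral>\<^sup>+\<omega>. F (case_nat s \<omega>) \<partial>S \<partial>M)"
proof -
  have case_nat_meas: "(\<lambda>(s, \<omega>). case_nat s \<omega>) \<in> measurable (M \<Otimes>\<^sub>M S) S"
    by measurable
  have "(\<integral>\<^sup>+\<omega>. F \<omega> \<partial>S) = (\<integral>\<^sup>+\<omega>. F \<omega> \<partial>distr (M \<Otimes>\<^sub>M S) S (\<lambda>(s, \<omega>). case_nat s \<omega>))"
    by (simp only: PiM_iter)
  also have "\<dots> = (\<integral>\<^sup>+z. F (case_prod case_nat z) \<partial>(M \<Otimes>\<^sub>M S))"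
    using assms by (intro nn_integral_distr[OF case_nat_meas]) simp
  also have "\<dots> = (\<integral>\<^sup>+s. \<integral>\<^sup>+\<omega>. F (case_nat s \<omega>) \<partial>S \<partial>M)"
    using P.nn_integral_fst[OF measurable_compose[OF case_nat_meas assms]] by simp
  finally show ?thesis .
qed

lemma emeasure_distr_nn_integral_indicator:
  assumes "A \<in> sets N" and "f \<in> measurable M N"
  shows "emeasure (distr M N f) A = (\<integral>\<^sup>+x. indicator A (f x) \<partial>M)"
proof -
  have "emeasure (distr M N f) A = (\<integral>\<^sup>+y. indicator A y \<partial>distr M N f)"
    using assms(1) by simp
  also have "\<dots> = (\<integral>\<^sup>+x. indicator A (f x) \<partial>M)"
    using assms by (intro nn_integral_distr) auto
  finally show ?thesis .
qed

lemma space_S1M [simp]: "space S1M = S1"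
  by (simp add: S1M_def space_restrict_space)

lemma compact_S1: "compact S1"
  by (simp add: S1_def compact_sphere)

lemma continuous_on_S1_bounded:
  fixes \<phi> :: "complex \<Rightarrow> real"
  assumes "continuous_on S1 \<phi>"
  obtains B where "\<And>z. z \<in> S1 \<Longrightarrow> \<bar>\<phi> z\<bar> \<le> B"
proof -
  have "bounded (\<phi> ` S1)"
    using assms compact_S1 by (intro compact_imp_bounded compact_continuous_image)
  then show ?thesis using that by (auto simp: bounded_iff)
qed

primrec act_comp :: "('h \<Rightarrow> 'a \<Rightarrow> 'a) \<Rightarrow> (nat \<Rightarrow> 'h) \<Rightarrow> nat \<Rightarrow> 'a \<Rightarrow> 'a" where
  "act_comp a \<omega> 0 = id"
| "act_comp a \<omega> (Suc n) = act_comp a \<omega> n \<circ> a (\<omega> n)"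

lemma act_comp_Suc_shift: "act_comp a \<omega> (Suc n) x = a (\<omega> 0) (act_comp a (\<omega> \<circ> Suc) n x)"
  by (induction n arbitrary: x) simp_all

definition act_stationary :: "('h \<Rightarrow> complex \<Rightarrow> complex) \<Rightarrow> 'h measure \<Rightarrow> complex measure \<Rightarrow> bool"
  where "act_stationary a nu \<mu> \<longleftrightarrow>
    (\<forall>A\<in>sets S1M. emeasure \<mu> A = (\<integral>\<^sup>+ f. emeasure (distr \<mu> S1M (a f)) A \<partial>nu))"

locale random_action = prob_space nu for nu :: "'h measure" +
  fixes a :: "'h \<Rightarrow> complex \<Rightarrow> complex"
  assumes measurable_action: "(\<lambda>(f, x). a f x) \<in> measurable (nu \<Otimes>\<^sub>M S1M) S1M"
    and continuous_action: "\<And>f. f \<in> space nu \<Longrightarrow> continuous_on S1 (a f)"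
begin

sublocale paths: sequence_space nu ..

abbreviation "\<Omega> \<equiv> Pi\<^sub>M UNIV (\<lambda>_::nat. nu)"

lemma measurable_action_at: "f \<in> space nu \<Longrightarrow> a f \<in> measurable S1M S1M"
  using measurable_Pair2[OF measurable_action] by simp

lemma action_in_S1: "f \<in> space nu \<Longrightarrow> x \<in> S1 \<Longrightarrow> a f x \<in> S1"
  using measurable_space[OF measurable_action_at] by fastforce

lemma act_comp_in_S1: "\<omega> \<in> space \<Omega> \<Longrightarrow> x \<in> S1 \<Longrightarrow> act_comp a \<omega> n x \<in> S1"
  by (induction n arbitrary: x) (auto simp: action_in_S1 space_PiM PiE_iff)

lemma measurable_act_comp: "(\<lambda>(\<omega>, x). act_comp a \<omega> n x) \<in> measurable (\<Omega> \<Otimes>\<^sub>M S1M) S1M"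
proof (induction n)
  case 0
  then show ?case by (simp add: id_def)
next
  case (Suc n)
  have "(\<lambda>z. a (fst z n) (snd z)) \<in> measurable (\<Omega> \<Otimes>\<^sub>M S1M) S1M"
    by (rule measurable_compose[OF _ measurable_action, where f="\<lambda>z. (fst z n, snd z)", simplified])
      measurable
  then have "(\<lambda>z. (fst z, a (fst z n) (snd z))) \<in> measurable (\<Omega> \<Otimes>\<^sub>M S1M) (\<Omega> \<Otimes>\<^sub>M S1M)"
    by measurable
  from measurable_compose[OF this Suc] show ?case
    by (simp add: split_beta')
qed

lemma vimage_act_comp_case_nat:
  assumes "\<omega> \<in> space \<Omega>"
  shows "act_comp a (case_nat s \<omega>) (Suc n) -` B \<inter> S1 = act_comp a \<omega> n -` (a s -` B \<inter> S1) \<inter> S1"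
  using act_comp_in_S1[OF assms]
  by (auto simp: act_comp_Suc_shift comp_def simp del: act_comp.simps)

context
  fixes \<mu> :: "complex measure"
  assumes prob_\<mu>: "prob_space \<mu>" and sets_\<mu>: "sets \<mu> = sets S1M"
    and stationary_\<mu>: "act_stationary a nu \<mu>"
begin

interpretation \<mu>: prob_space \<mu> by (rule prob_\<mu>)

lemma space_\<mu>: "space \<mu> = S1"
  using sets_eq_imp_space_eq[OF sets_\<mu>] by simp

lemma measurable_act_comp_\<mu>: "(\<lambda>(\<omega>, y). act_comp a \<omega> n y) \<in> measurable (\<Omega> \<Otimes>\<^sub>M \<mu>) S1M"
  using measurable_act_comp[of n]
  by (simp add: measurable_cong_sets[OF sets_pair_measure_cong[OF refl sets_\<mu>] refl])

lemma Pair_vimage_act_comp: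
  "\<omega> \<in> space \<Omega> \<Longrightarrow> Pair \<omega> -` ((\<lambda>(\<omega>, y). act_comp a \<omega> n y) -` B \<inter> space (\<Omega> \<Otimes>\<^sub>M \<mu>))
     = act_comp a \<omega> n -` B \<inter> S1"
  by (auto simp: space_pair_measure space_\<mu>)

lemma emeasure_stationary_vimage:
  "B \<in> sets S1M \<Longrightarrow> emeasure \<mu> B = (\<integral>\<^sup>+s. emeasure \<mu> (a s -` B \<inter> S1) \<partial>nu)"
  using stationary_\<mu> measurable_action_at
  by (auto simp: act_stationary_def emeasure_distr space_\<mu> measurable_cong_sets[OF sets_\<mu> refl]
      intro!: nn_integral_cong)

lemma emeasure_stationary_act_comp:
  assumes "B \<in> sets S1M"
  shows "emeasure \<mu> B = (\<integral>\<^sup>+\<omega>. emeasure \<mu> (act_comp a \<omega> n -` B \<inter> S1) \<partial>\<Omega>)"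
  using assms
proof (induction n arbitrary: B)
  case 0
  then show ?case
    using sets.sets_into_space[OF "0"] by (simp add: Int_absorb2 paths.emeasure_space_1)
next
  case (Suc n)
  have "(\<lambda>\<omega>. emeasure \<mu> (act_comp a \<omega> (Suc n) -` B \<inter> S1)) \<in> borel_measurable \<Omega>"
    using \<mu>.measurable_emeasure_Pair[OF measurable_sets[OF measurable_act_comp_\<mu> Suc.prems]]
    by (rule measurable_cong[THEN iffD1, rotated]) (simp only: Pair_vimage_act_comp)
  then have "(\<integral>\<^sup>+\<omega>. emeasure \<mu> (act_comp a \<omega> (Suc n) -` B \<inter> S1) \<partial>\<Omega>)
      = (\<integral>\<^sup>+s. \<integral>\<^sup>+\<omega>. emeasure \<mu> (act_comp a (case_nat s \<omega>) (Suc n) -` B \<inter> S1) \<partial>\<Omega> \<partial>nu)"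
    by (rule paths.nn_integral_PiM_case_nat)
  also have "\<dots> = (\<integral>\<^sup>+s. \<integral>\<^sup>+\<omega>. emeasure \<mu> (act_comp a \<omega> n -` (a s -` B \<inter> S1) \<inter> S1) \<partial>\<Omega> \<partial>nu)"
    by (intro nn_integral_cong) (simp add: vimage_act_comp_case_nat del: act_comp.simps)
  also have "\<dots> = (\<integral>\<^sup>+s. emeasure \<mu> (a s -` B \<inter> S1) \<partial>nu)"
    using measurable_sets[OF measurable_action_at Suc.prems]
    by (intro nn_integral_cong Suc.IH[symmetric]) simp
  also have "\<dots> = emeasure \<mu> B"
    by (rule emeasure_stationary_vimage[OF Suc.prems, symmetric])
  finally show ?case ..
qed

lemma distr_act_comp_stationary: "distr (\<Omega> \<Otimes>\<^sub>M \<mu>) S1M (\<lambda>(\<omega>, y). act_comp a \<omega> n y) = \<mu>"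
proof (rule measure_eqI)
  fix B assume "B \<in> sets (distr (\<Omega> \<Otimes>\<^sub>M \<mu>) S1M (\<lambda>(\<omega>, y). act_comp a \<omega> n y))"
  then have B: "B \<in> sets S1M" by simp
  have "emeasure (distr (\<Omega> \<Otimes>\<^sub>M \<mu>) S1M (\<lambda>(\<omega>, y). act_comp a \<omega> n y)) B
      = emeasure (\<Omega> \<Otimes>\<^sub>M \<mu>) ((\<lambda>(\<omega>, y). act_comp a \<omega> n y) -` B \<inter> space (\<Omega> \<Otimes>\<^sub>M \<mu>))"
    by (rule emeasure_distr[OF measurable_act_comp_\<mu> B])
  also have "\<dots> = (\<integral>\<^sup>+\<omega>. emeasure \<mu> (act_comp a \<omega> n -` B \<inter> S1) \<partial>\<Omega>)"
    unfolding \<mu>.emeasure_pair_measure_alt[OF measurable_sets[OF measurable_act_comp_\<mu> B]]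
    by (rule nn_integral_cong) (simp only: Pair_vimage_act_comp)
  also have "\<dots> = emeasure \<mu> B"
    by (rule emeasure_stationary_act_comp[OF B, symmetric])
  finally show "emeasure (distr (\<Omega> \<Otimes>\<^sub>M \<mu>) S1M (\<lambda>(\<omega>, y). act_comp a \<omega> n y)) B = emeasure \<mu> B" .
qed (simp add: sets_\<mu>)

lemma integral_stationary_act_comp:
  fixes \<phi> :: "complex \<Rightarrow> real"
  assumes \<phi>: "\<phi> \<in> borel_measurable S1M" and bound: "\<And>z. z \<in> S1 \<Longrightarrow> \<bar>\<phi> z\<bar> \<le> B"
  shows "(\<integral>y. \<phi> y \<partial>\<mu>) = (\<integral>y. \<integral>\<omega>. \<phi> (act_comp a \<omega> n y) \<partial>\<Omega> \<partial>\<mu>)"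
proof -
  interpret pair_prob_space \<Omega> \<mu> ..
  have "(\<integral>y. \<phi> y \<partial>\<mu>) = (\<integral>y. \<phi> y \<partial>distr (\<Omega> \<Otimes>\<^sub>M \<mu>) S1M (\<lambda>(\<omega>, y). act_comp a \<omega> n y))"
    by (simp only: distr_act_comp_stationary)
  also have "\<dots> = (\<integral>z. \<phi> (case z of (\<omega>, y) \<Rightarrow> act_comp a \<omega> n y) \<partial>(\<Omega> \<Otimes>\<^sub>M \<mu>))"
    by (rule integral_distr[OF measurable_act_comp_\<mu> \<phi>])
  also have "\<dots> = (\<integral>y. \<integral>\<omega>. \<phi> (act_comp a \<omega> n y) \<partial>\<Omega> \<partial>\<mu>)"
  proof -
    have "integrable (\<Omega> \<Otimes>\<^sub>M \<mu>) (case_prod (\<lambda>\<omega> y. \<phi> (act_comp a \<omega> n y)))"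
      using measurable_act_comp_\<mu> \<phi> bound act_comp_in_S1
      by (intro integrable_const_bound[where B=B])
        (auto simp: space_pair_measure space_\<mu> split_beta')
    from integral_snd[OF this] show ?thesis by (simp add: split_beta')
  qed
  finally show ?thesis .
qed

end

end

locale random_action_limit = random_action nu a for nu :: "'h measure" and a +
  fixes p :: "(nat \<Rightarrow> 'h) \<Rightarrow> complex"
  assumes measurable_limit: "p \<in> measurable (Pi\<^sub>M UNIV (\<lambda>_::nat. nu)) S1M"
    and act_comp_tendsto:
      "\<And>x. x \<in> S1 \<Longrightarrow> AE \<omega> in Pi\<^sub>M UNIV (\<lambda>_::nat. nu). (\<lambda>n. act_comp a \<omega> n x) \<longlonglongrightarrow> p \<omega>"
begin

lemma limit_in_S1: "\<omega> \<in> space \<Omega> \<Longrightarrow> p \<omega> \<in> S1"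
  using measurable_space[OF measurable_limit] by fastforce

lemma limit_equivariant: "AE \<omega> in \<Omega>. p \<omega> = a (\<omega> 0) (p (\<omega> \<circ> Suc))"
proof -
  have "1 \<in> S1" by (simp add: S1_def)
  note tendsto = act_comp_tendsto[OF this]
  show ?thesis
    using AE_space tendsto paths.AE_PiM_shift[OF tendsto]
  proof eventually_elim
    case (elim \<omega>)
    have shift: "\<omega> \<circ> Suc \<in> space \<Omega>"
      using measurable_space[OF paths.measurable_PiM_shift elim(1)] .
    have "\<omega> 0 \<in> space nu"
      using elim(1) by (simp add: space_PiM PiE_iff)
    then have "(\<lambda>n. a (\<omega> 0) (act_comp a (\<omega> \<circ> Suc) n 1)) \<longlonglongrightarrow> a (\<omega> 0) (p (\<omega> \<circ> Suc))"
      using act_comp_in_S1[OF shift \<open>1 \<in> S1\<close>] limit_in_S1[OF shift]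
      by (intro continuous_on_tendsto_compose[OF continuous_action _ _ always_eventually] elim(3))
        auto
    then have "(\<lambda>n. act_comp a \<omega> (Suc n) 1) \<longlonglongrightarrow> a (\<omega> 0) (p (\<omega> \<circ> Suc))"
      by (simp only: act_comp_Suc_shift)
    moreover have "(\<lambda>n. act_comp a \<omega> (Suc n) 1) \<longlonglongrightarrow> p \<omega>"
      using elim(2) by (rule LIMSEQ_Suc)
    ultimately show ?case using LIMSEQ_unique by blast
  qed
qed

lemma stationary_distr_limit: "act_stationary a nu (distr \<Omega> S1M p)"
  unfolding act_stationary_def
proof
  fix A assume A: "A \<in> sets S1M"
  have "(\<lambda>\<omega>. (\<omega> 0, p (\<omega> \<circ> Suc))) \<in> measurable \<Omega> (nu \<Otimes>\<^sub>M S1M)"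
    using measurable_limit paths.measurable_PiM_shift by measurable
  from measurable_compose[OF this measurable_action]
  have equivariant_meas:
    "(\<lambda>\<omega>. indicator A (a (\<omega> 0) (p (\<omega> \<circ> Suc))) :: ennreal) \<in> borel_measurable \<Omega>"
    using A by simp
  have "emeasure (distr \<Omega> S1M p) A = (\<integral>\<^sup>+\<omega>. indicator A (p \<omega>) \<partial>\<Omega>)"
    using A measurable_limit by (rule emeasure_distr_nn_integral_indicator)
  also have "\<dots> = (\<integral>\<^sup>+\<omega>. indicator A (a (\<omega> 0) (p (\<omega> \<circ> Suc))) \<partial>\<Omega>)"
    using limit_equivariant by (intro nn_integral_cong_AE) auto
  also have "\<dots> = (\<integral>\<^sup>+s. \<integral>\<^sup>+\<omega>. indicator A (a s (p \<omega>)) \<partial>\<Omega> \<partial>nu)"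
    by (subst paths.nn_integral_PiM_case_nat[OF equivariant_meas]) (simp add: comp_def)
  also have "\<dots> = (\<integral>\<^sup>+s. emeasure (distr (distr \<Omega> S1M p) S1M (a s)) A \<partial>nu)"
  proof (rule nn_integral_cong)
    fix s assume s: "s \<in> space nu"
    have "emeasure (distr (distr \<Omega> S1M p) S1M (a s)) A
        = (\<integral>\<^sup>+y. indicator A (a s y) \<partial>distr \<Omega> S1M p)"
      using A measurable_action_at[OF s] by (simp add: emeasure_distr_nn_integral_indicator)
    also have "\<dots> = (\<integral>\<^sup>+\<omega>. indicator A (a s (p \<omega>)) \<partial>\<Omega>)"
      using A measurable_action_at[OF s] by (intro nn_integral_distr measurable_limit) simp
    finally show "(\<integral>\<^sup>+\<omega>. indicator A (a s (p \<omega>)) \<partial>\<Omega>)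
        = emeasure (distr (distr \<Omega> S1M p) S1M (a s)) A" ..
  qed
  finally show "emeasure (distr \<Omega> S1M p) A
      = (\<integral>\<^sup>+s. emeasure (distr (distr \<Omega> S1M p) S1M (a s)) A \<partial>nu)" .
qed

lemma tendsto_integral_act_comp:
  fixes \<phi> :: "complex \<Rightarrow> real"
  assumes cont: "continuous_on S1 \<phi>" and y: "y \<in> S1"
  shows "(\<lambda>n. \<integral>\<omega>. \<phi> (act_comp a \<omega> n y) \<partial>\<Omega>) \<longlonglongrightarrow> (\<integral>\<omega>. \<phi> (p \<omega>) \<partial>\<Omega>)"
proof -
  obtain B where bound: "\<And>z. z \<in> S1 \<Longrightarrow> \<bar>\<phi> z\<bar> \<le> B"
    using continuous_on_S1_bounded[OF cont] by blast
  have \<phi>_meas: "\<phi> \<in> borel_measurable S1M"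
    unfolding S1M_def by (rule borel_measurable_continuous_on_restrict[OF cont])
  show ?thesis
  proof (rule integral_dominated_convergence[where w="\<lambda>_. B"])
    show "(\<lambda>\<omega>. \<phi> (p \<omega>)) \<in> borel_measurable \<Omega>"
      using measurable_compose[OF measurable_limit \<phi>_meas] .
    show "(\<lambda>\<omega>. \<phi> (act_comp a \<omega> n y)) \<in> borel_measurable \<Omega>" for n
      using measurable_compose[OF measurable_Pair1[OF measurable_act_comp[of n], of y] \<phi>_meas] y
      by simp
    show "AE \<omega> in \<Omega>. (\<lambda>n. \<phi> (act_comp a \<omega> n y)) \<longlonglongrightarrow> \<phi> (p \<omega>)"
      using act_comp_tendsto[OF y] AE_space
    proof eventually_elim
      case (elim \<omega>)
      then show ?case
        using act_comp_in_S1[OF _ y] limit_in_S1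
        by (intro continuous_on_tendsto_compose[OF cont elim(1) _ always_eventually]) auto
    qed
    show "AE \<omega> in \<Omega>. norm (\<phi> (act_comp a \<omega> n y)) \<le> B" for n
      using act_comp_in_S1[OF _ y] bound by (intro AE_I2) simp
  qed simp
qed

lemma integral_stationary_eq_limit:
  fixes \<phi> :: "complex \<Rightarrow> real"
  assumes prob_\<mu>: "prob_space \<mu>" and sets_\<mu>: "sets \<mu> = sets S1M"
    and stationary_\<mu>: "act_stationary a nu \<mu>" and cont: "continuous_on S1 \<phi>"
  shows "(\<integral>y. \<phi> y \<partial>\<mu>) = (\<integral>\<omega>. \<phi> (p \<omega>) \<partial>\<Omega>)"
proof -
  interpret \<mu>: prob_space \<mu> by (rule prob_\<mu>)
  note stationary = prob_\<mu> sets_\<mu> stationary_\<mu>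
  obtain B where bound: "\<And>z. z \<in> S1 \<Longrightarrow> \<bar>\<phi> z\<bar> \<le> B"
    using continuous_on_S1_bounded[OF cont] by blast
  have \<phi>_meas: "\<phi> \<in> borel_measurable S1M"
    unfolding S1M_def by (rule borel_measurable_continuous_on_restrict[OF cont])
  let ?I = "\<lambda>n y. \<integral>\<omega>. \<phi> (act_comp a \<omega> n y) \<partial>\<Omega>"
  let ?c = "\<integral>\<omega>. \<phi> (p \<omega>) \<partial>\<Omega>"
  have "(\<lambda>n. \<integral>y. ?I n y \<partial>\<mu>) \<longlonglongrightarrow> (\<integral>y. ?c \<partial>\<mu>)"
  proof (rule integral_dominated_convergence[where w="\<lambda>_. B"])
    have "(\<lambda>(y, \<omega>). \<phi> (act_comp a \<omega> n y)) \<in> borel_measurable (\<mu> \<Otimes>\<^sub>M \<Omega>)" for n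
      using measurable_compose[OF measurable_pair_swap'
          measurable_compose[OF measurable_act_comp_\<mu>[OF stationary] \<phi>_meas]]
      by (simp add: split_beta')
    then show "?I n \<in> borel_measurable \<mu>" for n
      by (rule paths.borel_measurable_lebesgue_integral)
    show "AE y in \<mu>. (\<lambda>n. ?I n y) \<longlonglongrightarrow> ?c"
      using tendsto_integral_act_comp[OF cont] by (intro AE_I2) (simp add: space_\<mu>[OF stationary])
    show "AE y in \<mu>. norm (?I n y) \<le> B" for n
    proof (rule AE_I2)
      fix y assume "y \<in> space \<mu>"
      then have "\<bar>\<phi> (act_comp a \<omega> n y)\<bar> \<le> B" if "\<omega> \<in> space \<Omega>" for \<omega>
        using bound act_comp_in_S1[OF that] space_\<mu>[OF stationary] by simp
      then have "\<bar>?I n y\<bar> \<le> (\<integral>\<omega>. B \<partial>\<Omega>)"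
        by (intro order_trans[OF integral_abs_bound] integral_mono')
          (auto intro: order_trans[OF abs_ge_zero])
      then show "norm (?I n y) \<le> B" by (simp add: paths.P.prob_space)
    qed
  qed simp_all
  moreover have "(\<integral>y. ?I n y \<partial>\<mu>) = (\<integral>y. \<phi> y \<partial>\<mu>)" for n
    using integral_stationary_act_comp[OF stationary \<phi>_meas bound] by simp
  ultimately have "(\<lambda>n. \<integral>y. \<phi> y \<partial>\<mu>) \<longlonglongrightarrow> ?c"
    by (simp add: \<mu>.prob_space)
  then show ?thesis by (simp add: LIMSEQ_const_iff)
qed

theorem stationary_unique:
  assumes "prob_space \<mu>" and sets_\<mu>: "sets \<mu> = sets S1M" and "act_stationary a nu \<mu>"
  shows "\<mu> = distr \<Omega> S1M p"
proof (rule measure_eqI_integral_continuous)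
  show "finite_measure \<mu>" "finite_measure (distr \<Omega> S1M p)"
    using assms(1) paths.prob_space_distr[OF measurable_limit]
    by (auto intro: prob_space.finite_measure)
  show "sets \<mu> = sets (restrict_space borel S1)"
    and "sets (distr \<Omega> S1M p) = sets (restrict_space borel S1)"
    by (simp_all add: sets_\<mu> S1M_def)
  show "S1 \<in> sets borel"
    using compact_S1 by (simp add: compact_imp_closed)
  fix \<phi> :: "complex \<Rightarrow> real" assume "continuous_on UNIV \<phi>"
  then have cont: "continuous_on S1 \<phi>" by (rule continuous_on_subset) simp
  then have "\<phi> \<in> borel_measurable S1M"
    unfolding S1M_def by (rule borel_measurable_continuous_on_restrict)
  with integral_stationary_eq_limit[OF assms cont]
  show "(\<integral>z. \<phi> z \<partial>\<mu>) = (\<integral>z. \<phi> z \<partial>distr \<Omega> S1M p)"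
    by (simp add: integral_distr[OF measurable_limit])
qed

end

section \<open>Homeomorphisms of the circle\<close>

lemma space_HomM: "space HomM = Hom"
  unfolding HomM_def by (auto simp: space_restrict_space space_PiM Hom_def PiE_def)

lemma homeomorphism_hinv: "f \<in> Hom \<Longrightarrow> homeomorphism S1 S1 f (hinv f)"
proof -
  assume "f \<in> Hom"
  then obtain g where hom: "homeomorphism S1 S1 f g" by (auto simp: Hom_def)
  have "inj_on f S1" using homeomorphism_apply1[OF hom] by (rule inj_on_inverseI)
  then have "hinv f y = g y" if "y \<in> S1" for y
    using that homeomorphism_apply2[OF hom] homeomorphism_image2[OF hom]
    by (auto simp: hinv_def intro: inv_into_f_eq)
  then show ?thesis by (intro homeomorphism_cong[OF hom]) simp_all
qed

lemma Hom_apply_in_S1: "f \<in> Hom \<Longrightarrow> x \<in> S1 \<Longrightarrow> f x \<in> S1"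
  using homeomorphism_image1[OF homeomorphism_hinv] by blast

lemma hinv_apply_in_S1: "f \<in> Hom \<Longrightarrow> x \<in> S1 \<Longrightarrow> hinv f x \<in> S1"
  using homeomorphism_image2[OF homeomorphism_hinv] by blast

lemma measurable_evaluation_HomM: "x \<in> S1 \<Longrightarrow> (\<lambda>f. f x) \<in> borel_measurable HomM"
  unfolding HomM_def by (rule measurable_restrict_space1) (rule measurable_component_singleton)

lemma measurable_apply_Hom: "(\<lambda>(f, x). f x) \<in> measurable (HomM \<Otimes>\<^sub>M S1M) S1M"
proof -
  have "(\<lambda>(f, x). f x) \<in> borel_measurable (HomM \<Otimes>\<^sub>M restrict_space borel S1)"
    using homeomorphism_hinv
    by (intro borel_measurable_Caratheodory measurable_evaluation_HomM)
      (auto simp: space_HomM homeomorphism_def)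
  moreover have "(\<lambda>(f, x). f x) \<in> space (HomM \<Otimes>\<^sub>M S1M) \<rightarrow> S1"
    by (auto simp: space_pair_measure space_HomM Hom_apply_in_S1)
  ultimately show ?thesis
    unfolding S1M_def by (intro measurable_restrict_space2)
qed

lemma measurable_hinv_Hom: "(\<lambda>(f, x). hinv f x) \<in> measurable (HomM \<Otimes>\<^sub>M S1M) S1M"
proof -
  have "(\<lambda>(f, x). hinv f x) \<in> borel_measurable (HomM \<Otimes>\<^sub>M restrict_space borel S1)"
    by (rule borel_measurable_inverse_homeomorphism[OF measurable_evaluation_HomM])
      (auto simp: space_HomM intro: homeomorphism_hinv compact_imp_closed compact_S1)
  moreover have "(\<lambda>(f, x). hinv f x) \<in> space (HomM \<Otimes>\<^sub>M S1M) \<rightarrow> S1"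
    by (auto simp: space_pair_measure space_HomM hinv_apply_in_S1)
  ultimately show ?thesis
    unfolding S1M_def by (intro measurable_restrict_space2)
qed

lemma random_action_Hom:
  assumes "prob_space nu" and "sets nu = sets HomM"
  shows "random_action nu (\<lambda>f. f)" and "random_action nu hinv"
proof -
  have space_nu: "space nu = Hom"
    using sets_eq_imp_space_eq[OF assms(2)] by (simp add: space_HomM)
  have "measurable (nu \<Otimes>\<^sub>M S1M) S1M = measurable (HomM \<Otimes>\<^sub>M S1M) S1M"
    by (intro measurable_cong_sets sets_pair_measure_cong assms(2)) simp_all
  then show "random_action nu (\<lambda>f. f)" "random_action nu hinv"
    using assms(1) measurable_apply_Hom measurable_hinv_Hom homeomorphism_hinv
    by (auto simp: random_action_def random_action_axioms_def space_nu homeomorphism_def)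
qed

lemma act_comp_id: "act_comp (\<lambda>f. f) \<omega> n = fwd_comp \<omega> n"
  by (induction n) simp_all

lemma act_comp_hinv: "act_comp hinv \<omega> n = bwd_comp \<omega> n"
  by (induction n) simp_all

theorem corollary1p2:
  fixes nu :: "(complex \<Rightarrow> complex) measure"
    and \<pi> \<theta> :: "(nat \<Rightarrow> complex \<Rightarrow> complex) \<Rightarrow> complex"
  assumes "prob_space nu"
    and "sets nu = sets HomM"
    and "proximal nu"
    and "\<not> fixes_point nu"
    and "\<pi> \<in> measurable (Pi\<^sub>M UNIV (\<lambda>_::nat. nu)) S1M"
    and "\<theta> \<in> measurable (Pi\<^sub>M UNIV (\<lambda>_::nat. nu)) S1M"
    and "\<forall>x\<in>S1. AE \<omega> in Pi\<^sub>M UNIV (\<lambda>_::nat. nu). (\<lambda>n. fwd_comp \<omega> n x) \<longlonglongrightarrow> \<pi> \<omega>"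
    and "\<forall>x\<in>S1. AE \<omega> in Pi\<^sub>M UNIV (\<lambda>_::nat. nu). (\<lambda>n. bwd_comp \<omega> n x) \<longlonglongrightarrow> \<theta> \<omega>"
  shows "stationary nu (distr (Pi\<^sub>M UNIV (\<lambda>_::nat. nu)) S1M \<pi>)
       \<and> (\<forall>\<mu>. prob_space \<mu> \<and> sets \<mu> = sets S1M \<and> stationary nu \<mu>
              \<longrightarrow> \<mu> = distr (Pi\<^sub>M UNIV (\<lambda>_::nat. nu)) S1M \<pi>)
       \<and> inv_stationary nu (distr (Pi\<^sub>M UNIV (\<lambda>_::nat. nu)) S1M \<theta>)
       \<and> (\<forall>\<mu>. prob_space \<mu> \<and> sets \<mu> = sets S1M \<and> inv_stationary nu \<mu>
              \<longrightarrow> \<mu> = distr (Pi\<^sub>M UNIV (\<lambda>_::nat. nu)) S1M \<theta>)"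
proof -
  interpret fwd: random_action_limit nu "\<lambda>f. f" \<pi>
    using random_action_Hom(1)[OF assms(1,2)] assms(5,7)
    by (simp add: random_action_limit_def random_action_limit_axioms_def act_comp_id)
  interpret bwd: random_action_limit nu hinv \<theta>
    using random_action_Hom(2)[OF assms(1,2)] assms(6,8)
    by (simp add: random_action_limit_def random_action_limit_axioms_def act_comp_hinv)
  have "stationary nu = act_stationary (\<lambda>f. f) nu" "inv_stationary nu = act_stationary hinv nu"
    by (simp_all add: fun_eq_iff stationary_def inv_stationary_def act_stationary_def)
  then show ?thesis
    using fwd.stationary_distr_limit fwd.stationary_unique
      bwd.stationary_distr_limit bwd.stationary_unique
    by simp
qed

end
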